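(* Let $n$ be even and $F\colon\mathbb F_2^n\to\mathbb F_2^n$ a quadratic function. Assume $N_F\cup\{0\}$ contains two subspaces $V,W\le\mathbb F_2^n$ with $V\oplus W=\mathbb F_2^n$. Then $|N_F|\ge 3\cdot(2^{n/2}-1)$. Furthermore, $N_F$ is a $3$-fold blocking set of $\mathrm{PG}(n-1,2)$ with respect to $(n/2)$-spaces, i.e. every subspace $U\le\mathbb F_2^n$ with $\dim U=\frac n2+1$ satisfies $|U\cap N_F|\ge3$.
   Context: $\langle\cdot,\cdot\rangle$ is the standard dot product; $F_b(x)=\langle b,F(x)\rangle$. $F$ is quadratic if each $F_b$ is a quadratic form plus an affine function. $F_b$ is bent if $|\sum_x(-1)^{F_b(x)+\langle x,a\rangle}|=2^{n/2}$ for all $a$. $N_F=\{b\in\mathbb F_2^n\setminus\{0\}\colon F_b\text{ not bent}\}$. $\mathrm{PG}(n-1,2)$ is identified with $\mathbb F_2^n\setminus\{0\}$; an $(n/2)$-space is $U\setminus\{0\}$ for a subspace $U$ of dimension $n/2+1$. *)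

theory Defs
  imports "HOL-Analysis.Analysis" "HOL-Library.Z2"
begin

text \<open>F_2^n is modelled as bit ^ 'n with n = CARD('n); subspaces and dimension are
  those of the library vector space interpretation vec (scalar multiplication *s).\<close>

definition dotp :: "bit ^ 'n \<Rightarrow> bit ^ 'n \<Rightarrow> bit" where
  "dotp a b = (\<Sum>i\<in>UNIV. a $ i * b $ i)"

definition component_fun :: "('a \<Rightarrow> bit ^ 'n) \<Rightarrow> bit ^ 'n \<Rightarrow> 'a \<Rightarrow> bit" where
  "component_fun F b = (\<lambda>x. dotp b (F x))"

definition is_quadratic_boolfun :: "(bit ^ 'n \<Rightarrow> bit) \<Rightarrow> bool" where
  "is_quadratic_boolfun f \<longleftrightarrow>
     (\<exists>(c :: 'n \<Rightarrow> 'n \<Rightarrow> bit) a e. \<forall>x.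
        f x = (\<Sum>i\<in>UNIV. \<Sum>j\<in>UNIV. c i j * x $ i * x $ j) + dotp a x + e)"

definition quadratic_fun :: "(bit ^ 'n \<Rightarrow> bit ^ 'n) \<Rightarrow> bool" where
  "quadratic_fun F \<longleftrightarrow> (\<forall>b. is_quadratic_boolfun (component_fun F b))"

definition sgn_bit :: "bit \<Rightarrow> int" where
  "sgn_bit z = (if z = 0 then 1 else -1)"

definition bent :: "(bit ^ 'n \<Rightarrow> bit) \<Rightarrow> bool" where
  "bent f \<longleftrightarrow> (\<forall>a. \<bar>\<Sum>x\<in>UNIV. sgn_bit (f x + dotp x a)\<bar> = 2 ^ (CARD('n) div 2))"

definition nonbent_set :: "(bit ^ 'n \<Rightarrow> bit ^ 'n) \<Rightarrow> (bit ^ 'n) set" where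
  "nonbent_set F = {b. b \<noteq> 0 \<and> \<not> bent (component_fun F b)}"

end

(*
  For a quadratic Boolean function f on F_2^n with n = 2m, squaring the Walsh transform gives
  W_f(a)^2 = 2^n times a character sum over the radical R of the polar form of f, and that sum
  is |R| or 0.  Hence f is bent iff R = 0, and otherwise 2^(m+1) divides W_f(0).

  Summing W_{F_b}(0) over b in a subspace U of dimension m+1 gives a multiple of |U| = 2^(m+1)
  (orthogonality of characters).  The term b = 0 and the non-bent terms are multiples of 2^(m+1)
  and the bent ones are +-2^m, so U contains an even number of bent components and U meets N_F
  in an odd number of points.  As U meets V and W in subspaces of total dimension at least 2,
  U contains at least two, hence at least three, points of N_F.

  For the count, fix V_0 <= V of dimension m (w.l.o.g. dim V >= m).  For w in W - {0} the
  subspace span(V_0, w) meets N_F in an odd number of points, so besides w and V_0 - {0} it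
  contains some e in N_F with e + w in V_0; such e lies neither in V nor in W, and distinct w
  give distinct e.  This yields (2^dim V - 1) + 2 (2^dim W - 1) >= 3 (2^m - 1) points.
*)

theory Submission
  imports Defs
begin

(* Z2 rewrites + and * on bit to xor and and, after which simp can no longer normalise sums of bits. *)
declare add_bit_eq_xor [simp del] mult_bit_eq_and [simp del]

lemma UNIV_bit: "(UNIV :: bit set) = {0, 1}"
  by (auto intro: bit.exhaust)

instance bit :: finite
  by standard (simp add: UNIV_bit)

lemma card_UNIV_bit: "CARD(bit) = 2"
  by (simp add: UNIV_bit)

lemma bitvec_add_self [simp]: "(x :: bit ^ 'n) + x = 0"
  by (simp add: vec_eq_iff)

lemma bitvec_add_self_left [simp]: "(x :: bit ^ 'n) + (x + y) = y"
  by (simp add: add.assoc[symmetric])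

lemma bitvec_diff_eq_add: "(x :: bit ^ 'n) - y = x + y"
  by (simp add: vec_eq_iff)

lemma bitvec_add_eq_0_iff: "(x :: bit ^ 'n) + y = 0 \<longleftrightarrow> x = y"
  by (metis bitvec_add_self_left add.right_neutral)

lemma sgn_bit_0 [simp]: "sgn_bit 0 = 1"
  and sgn_bit_1 [simp]: "sgn_bit 1 = -1"
  by (simp_all add: sgn_bit_def)

lemma sgn_bit_add: "sgn_bit (a + b) = sgn_bit a * sgn_bit b"
  by (cases a; cases b) simp_all

lemma dotp_add_left: "dotp (x + y) a = dotp x a + dotp y a"
  unfolding dotp_def by (simp only: vector_add_component distrib_right sum.distrib)

lemma dotp_add_right: "dotp a (x + y) = dotp a x + dotp a y"
  unfolding dotp_def by (simp only: vector_add_component distrib_left sum.distrib)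

lemma dotp_0_left [simp]: "dotp 0 a = 0"
  and dotp_0_right [simp]: "dotp a 0 = 0"
  by (simp_all add: dotp_def)

lemma sum_sgn_bit_additive:
  fixes S :: "(bit ^ 'n) set" and l :: "bit ^ 'n \<Rightarrow> bit"
  assumes closed: "\<And>x y. x \<in> S \<Longrightarrow> y \<in> S \<Longrightarrow> x + y \<in> S"
    and additive: "\<And>x y. x \<in> S \<Longrightarrow> y \<in> S \<Longrightarrow> l (x + y) = l x + l y"
  shows "(\<Sum>x\<in>S. sgn_bit (l x)) = (if \<forall>x\<in>S. l x = 0 then int (card S) else 0)"
proof (cases "\<forall>x\<in>S. l x = 0")
  case False
  then obtain c where c: "c \<in> S" "l c = 1" by auto
  have shift: "bij_betw (\<lambda>x. x + c) S S"
    by (rule bij_betwI[where g = "\<lambda>x. x + c"]) (auto simp: closed c(1) add.assoc)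
  have "(\<Sum>x\<in>S. sgn_bit (l x)) = (\<Sum>x\<in>S. sgn_bit (l (x + c)))"
    by (rule sum.reindex_bij_betw[OF shift, symmetric])
  also have "\<dots> = (\<Sum>x\<in>S. - sgn_bit (l x))"
    by (intro sum.cong refl) (simp add: additive c sgn_bit_add)
  finally have "(\<Sum>x\<in>S. sgn_bit (l x)) = 0"
    by (simp add: sum_negf)
  then show ?thesis
    using False by auto
qed simp

lemma card_subspace:
  fixes U :: "(bit ^ 'n) set"
  assumes U: "vec.subspace U"
  shows "card U = 2 ^ vec.dim U"
proof -
  obtain B where B: "B \<subseteq> U" "vec.independent B" "U \<subseteq> vec.span B" "card B = vec.dim U"
    using vec.basis_exists by blast
  have finB: "finite B" by simp
  have spanB: "vec.span B = U" using vec.span_subspace[OF B(1) B(3) U] .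
  define comb where "comb u = (\<Sum>v\<in>B. u v *s v)" for u :: "bit ^ 'n \<Rightarrow> bit"
  have "comb ` (B \<rightarrow>\<^sub>E UNIV) = U"
  proof
    show "comb ` (B \<rightarrow>\<^sub>E UNIV) \<subseteq> U"
      using vec.span_finite[OF finB] spanB unfolding comb_def by auto
    show "U \<subseteq> comb ` (B \<rightarrow>\<^sub>E UNIV)"
    proof
      fix x assume "x \<in> U"
      then obtain u where u: "x = comb u"
        using vec.span_finite[OF finB] spanB unfolding comb_def by auto
      have "comb u = comb (restrict u B)"
        unfolding comb_def by (rule sum.cong) auto
      then show "x \<in> comb ` (B \<rightarrow>\<^sub>E UNIV)" using u by force
    qed
  qed
  moreover have "inj_on comb (B \<rightarrow>\<^sub>E UNIV)"
  proof (rule inj_onI)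
    fix u u' assume u: "u \<in> B \<rightarrow>\<^sub>E UNIV" and u': "u' \<in> B \<rightarrow>\<^sub>E UNIV" and eq: "comb u = comb u'"
    have "(\<Sum>v\<in>B. (u v - u' v) *s v) = comb u - comb u'"
      unfolding comb_def by (simp only: vec.scale_left_diff_distrib sum_subtractf)
    with eq have "(\<Sum>v\<in>B. (u v - u' v) *s v) = 0" by simp
    with B(2) have "\<forall>v\<in>B. u v - u' v = 0"
      unfolding vec.independent_explicit by (elim conjE allE[of _ "\<lambda>v. u v - u' v"]) blast
    then have "\<forall>v\<in>B. u v = u' v" by (metis right_minus_eq)
    then show "u = u'" by (metis PiE_ext u u')
  qed
  ultimately have "card U = card (B \<rightarrow>\<^sub>E (UNIV :: bit set))"
    using card_image by fastforce
  also have "\<dots> = 2 ^ card B" by (simp add: card_PiE[OF finB] card_UNIV_bit)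
  finally show ?thesis using B(4) by simp
qed

lemma card_subspace_minus_zero:
  fixes U :: "(bit ^ 'n) set"
  assumes "vec.subspace U"
  shows "card (U - {0}) = 2 ^ vec.dim U - 1"
  using card_subspace[OF assms] vec.subspace_0[OF assms] by (simp add: card_Diff_singleton)

lemma even_card_subspace:
  fixes S :: "(bit ^ 'n) set"
  assumes "vec.subspace S" "S \<noteq> {0}"
  shows "even (card S)"
proof -
  have "vec.dim S \<noteq> 0"
    using assms vec.subspace_0[OF assms(1)] vec.dim_eq_0 by blast
  then show ?thesis
    using card_subspace[OF assms(1)] by (cases "vec.dim S") simp_all
qed

lemma prime_power_dvd_of_dvd_square:
  fixes p s :: "'a :: factorial_semiring"
  assumes p: "prime_elem p" and dvd: "p ^ (2 * m + 1) dvd s ^ 2"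
  shows "p ^ (m + 1) dvd s"
proof (cases "s = 0")
  case False
  note le_multiplicity_iff = power_dvd_iff_le_multiplicity[OF _ prime_elem_not_unit[OF p]]
  have "2 * m + 1 \<le> multiplicity p (s ^ 2)"
    using dvd False le_multiplicity_iff[of "s ^ 2" "2 * m + 1"] by simp
  also have "\<dots> = 2 * multiplicity p s"
    by (rule prime_elem_multiplicity_power_distrib[OF p False])
  finally show ?thesis
    using False le_multiplicity_iff[of s "m + 1"] by simp
qed simp

definition polar :: "(bit ^ 'n \<Rightarrow> bit) \<Rightarrow> bit ^ 'n \<Rightarrow> bit ^ 'n \<Rightarrow> bit" where
  "polar f x y = f (x + y) + f x + f y + f 0"

definition radical :: "(bit ^ 'n \<Rightarrow> bit) \<Rightarrow> (bit ^ 'n) set" where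
  "radical f = {y. \<forall>x. polar f x y = 0}"

definition walsh :: "(bit ^ 'n \<Rightarrow> bit) \<Rightarrow> bit ^ 'n \<Rightarrow> int" where
  "walsh f a = (\<Sum>x\<in>UNIV. sgn_bit (f x + dotp x a))"

lemma bent_iff_walsh: "bent f \<longleftrightarrow> (\<forall>a. \<bar>walsh f a\<bar> = 2 ^ (CARD('n) div 2))"
  for f :: "bit ^ 'n \<Rightarrow> bit"
  unfolding bent_def walsh_def ..

lemma polar_commute: "polar f x y = polar f y x"
  unfolding polar_def by (simp add: ac_simps)

lemma add_eq_polar: "f (x + y) = f x + f y + f 0 + polar f x y"
  unfolding polar_def by (simp add: ac_simps)

lemma polar_add_dotp: "polar (\<lambda>x. f x + dotp x a) = polar f"
  unfolding polar_def by (simp add: fun_eq_iff dotp_add_left ac_simps)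

lemma quadratic_polarE:
  assumes "is_quadratic_boolfun f"
  obtains c :: "'n::finite \<Rightarrow> 'n \<Rightarrow> bit"
  where "\<And>x y. polar f x y = (\<Sum>i\<in>UNIV. \<Sum>j\<in>UNIV. c i j * (x $ i * y $ j + y $ i * x $ j))"
proof -
  obtain c a e where f: "\<And>x. f x = (\<Sum>i\<in>UNIV. \<Sum>j\<in>UNIV. c i j * x $ i * x $ j) + dotp a x + e"
    using assms unfolding is_quadratic_boolfun_def by blast
  define Q where "Q x = (\<Sum>i\<in>UNIV. \<Sum>j\<in>UNIV. c i j * x $ i * x $ j)" for x :: "bit ^ 'n"
  define B where "B x y = (\<Sum>i\<in>UNIV. \<Sum>j\<in>UNIV. c i j * (x $ i * y $ j + y $ i * x $ j))"
    for x y :: "bit ^ 'n"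
  have "Q (x + y) = Q x + Q y + B x y" for x y
    unfolding Q_def B_def by (simp add: algebra_simps sum.distrib)
  moreover have "Q 0 = 0" unfolding Q_def by simp
  ultimately have "polar f x y = B x y" for x y
    unfolding polar_def f Q_def[symmetric] by (simp add: dotp_add_right ac_simps)
  then show ?thesis unfolding B_def by (rule that)
qed

lemma quadratic_polar_add_left:
  assumes "is_quadratic_boolfun f"
  shows "polar f (x + x') y = polar f x y + polar f x' y"
proof -
  obtain c where "\<And>x y. polar f x y = (\<Sum>i\<in>UNIV. \<Sum>j\<in>UNIV. c i j * (x $ i * y $ j + y $ i * x $ j))"
    using quadratic_polarE[OF assms] by blast
  then show ?thesis by (simp add: algebra_simps sum.distrib)
qed

lemma subspace_radical:
  assumes "is_quadratic_boolfun f"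
  shows "vec.subspace (radical f)"
  unfolding vec.subspace_def
proof (intro conjI ballI allI)
  show "0 \<in> radical f" by (simp add: radical_def polar_def)
next
  fix y z assume "y \<in> radical f" "z \<in> radical f"
  then have "polar f x y = 0" "polar f x z = 0" for x
    by (simp_all add: radical_def)
  then have "polar f x (y + z) = 0" for x
    using quadratic_polar_add_left[OF assms, of y z x] polar_commute by (metis add_0)
  then show "y + z \<in> radical f" by (simp add: radical_def)
next
  fix c :: bit and y assume "y \<in> radical f"
  moreover have "0 \<in> radical f" by (simp add: radical_def polar_def)
  ultimately show "c *s y \<in> radical f" by (cases c) simp_all
qed

lemma walsh_square:
  fixes f :: "bit ^ 'n \<Rightarrow> bit"
  assumes "is_quadratic_boolfun f"
  shows "(walsh f a)\<^sup>2 = 2 ^ CARD('n) * (\<Sum>y\<in>radical f. sgn_bit (f y + f 0 + dotp y a))"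
proof -
  define g where "g x = f x + dotp x a" for x
  have polar_g: "polar g = polar f"
    unfolding g_def by (rule polar_add_dotp)
  have character: "(\<Sum>x\<in>UNIV. sgn_bit (polar f x y)) = (if y \<in> radical f then 2 ^ CARD('n) else 0)"
    for y :: "bit ^ 'n"
    using sum_sgn_bit_additive[of UNIV "\<lambda>x. polar f x y"] quadratic_polar_add_left[OF assms]
    by (simp add: radical_def card_UNIV_bit)
  have "(walsh f a)\<^sup>2 = (\<Sum>x\<in>UNIV. \<Sum>y\<in>UNIV. sgn_bit (g x) * sgn_bit (g y))"
    by (simp add: walsh_def g_def power2_eq_square sum_product)
  also have "\<dots> = (\<Sum>x\<in>UNIV. \<Sum>y\<in>UNIV. sgn_bit (g x) * sgn_bit (g (x + y)))"
  proof (rule sum.cong[OF refl])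
    fix x :: "bit ^ 'n"
    show "(\<Sum>y\<in>UNIV. sgn_bit (g x) * sgn_bit (g y)) = (\<Sum>y\<in>UNIV. sgn_bit (g x) * sgn_bit (g (x + y)))"
      using sum.reindex_bij_betw[OF bij_plus[of x], of "\<lambda>y. sgn_bit (g x) * sgn_bit (g y)"] by simp
  qed
  also have "\<dots> = (\<Sum>x\<in>UNIV. \<Sum>y\<in>UNIV. sgn_bit (g y + g 0) * sgn_bit (polar f x y))"
    by (intro sum.cong refl)
      (simp add: add_eq_polar[of g] polar_g sgn_bit_add[symmetric] ac_simps)
  also have "\<dots> = (\<Sum>y\<in>UNIV. sgn_bit (g y + g 0) * (\<Sum>x\<in>UNIV. sgn_bit (polar f x y)))"
    by (subst sum.swap) (simp add: sum_distrib_left)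
  also have "\<dots> = (\<Sum>y\<in>radical f. sgn_bit (g y + g 0) * 2 ^ CARD('n))"
    by (simp add: character if_distrib sum.If_cases)
  finally show ?thesis
    by (simp add: g_def sum_distrib_left ac_simps)
qed

lemma even_sum_sgn_bit_radical:
  fixes f :: "bit ^ 'n \<Rightarrow> bit"
  assumes quadratic: "is_quadratic_boolfun f" and nontrivial: "radical f \<noteq> {0}"
  shows "even (\<Sum>y\<in>radical f. sgn_bit (f y + f 0 + dotp y a))"
proof -
  note subspace = subspace_radical[OF quadratic]
  have "f (y + z) + f 0 + dotp (y + z) a = (f y + f 0 + dotp y a) + (f z + f 0 + dotp z a)"
    if "z \<in> radical f" for y z
    using that by (simp add: add_eq_polar[of f y z] radical_def dotp_add_left ac_simps)
  then have "(\<Sum>y\<in>radical f. sgn_bit (f y + f 0 + dotp y a)) \<in> {int (card (radical f)), 0}"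
    using sum_sgn_bit_additive[of "radical f" "\<lambda>y. f y + f 0 + dotp y a"] vec.subspace_add[OF subspace]
    by auto
  moreover have "even (card (radical f))"
    by (rule even_card_subspace[OF subspace nontrivial])
  ultimately show ?thesis by auto
qed

lemma bent_if_radical_trivial:
  fixes f :: "bit ^ 'n \<Rightarrow> bit"
  assumes "even CARD('n)" "is_quadratic_boolfun f" "radical f = {0}"
  shows "bent f"
  unfolding bent_iff_walsh
proof
  fix a
  have "\<bar>walsh f a\<bar>\<^sup>2 = (2 ^ (CARD('n) div 2))\<^sup>2"
    using walsh_square[OF assms(2), of a] assms(1,3) by (simp add: power_mult[symmetric])
  then show "\<bar>walsh f a\<bar> = 2 ^ (CARD('n) div 2)"
    by (subst (asm) power2_eq_iff_nonneg) auto
qed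

lemma pow2_dvd_walsh_if_not_bent:
  fixes f :: "bit ^ 'n \<Rightarrow> bit"
  assumes even: "even CARD('n)" and quadratic: "is_quadratic_boolfun f" and "\<not> bent f"
  shows "2 ^ (CARD('n) div 2 + 1) dvd walsh f 0"
proof -
  obtain m where m: "CARD('n) = 2 * m" using even by blast
  have "radical f \<noteq> {0}"
    using bent_if_radical_trivial[OF even quadratic] assms(3) by blast
  then have "even (\<Sum>y\<in>radical f. sgn_bit (f y + f 0 + dotp y 0))"
    by (rule even_sum_sgn_bit_radical[OF quadratic])
  then have "2 ^ (2 * m + 1) dvd (walsh f 0)\<^sup>2"
    unfolding walsh_square[OF quadratic] m by (auto simp: power_add intro: mult_dvd_mono)
  then show ?thesis
    using prime_power_dvd_of_dvd_square[of "2 :: int" m "walsh f 0"] m by simp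
qed

lemma card_dvd_sum_walsh_components:
  fixes F :: "bit ^ 'n \<Rightarrow> bit ^ 'n" and U :: "(bit ^ 'n) set"
  assumes "vec.subspace U"
  shows "int (card U) dvd (\<Sum>b\<in>U. walsh (component_fun F b) 0)"
proof -
  have "(\<Sum>b\<in>U. walsh (component_fun F b) 0) = (\<Sum>x\<in>UNIV. \<Sum>b\<in>U. sgn_bit (dotp b (F x)))"
    unfolding walsh_def component_fun_def by (simp add: sum.swap[of _ U])
  also have "int (card U) dvd \<dots>"
  proof (rule dvd_sum)
    fix x
    have "(\<Sum>b\<in>U. sgn_bit (dotp b (F x))) = (if \<forall>b\<in>U. dotp b (F x) = 0 then int (card U) else 0)"
      by (rule sum_sgn_bit_additive) (simp_all add: vec.subspace_add[OF assms] dotp_add_left)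
    then show "int (card U) dvd (\<Sum>b\<in>U. sgn_bit (dotp b (F x)))" by simp
  qed
  finally show ?thesis .
qed

lemma not_bent_const_zero: "\<not> bent (\<lambda>x :: bit ^ 'n. 0)"
proof -
  have "walsh (\<lambda>x :: bit ^ 'n. 0) 0 = 2 ^ CARD('n)"
    by (simp add: walsh_def card_UNIV_bit)
  moreover have "(2 :: int) ^ (CARD('n) div 2) < 2 ^ CARD('n)"
    by (rule power_strict_increasing) simp_all
  ultimately show ?thesis
    unfolding bent_iff_walsh by (metis abs_of_nonneg less_irrefl zero_le_power zero_le_numeral)
qed

lemma even_card_if_pow2_dvd_sum:
  fixes w :: "'a \<Rightarrow> int"
  assumes "finite A" and abs_w: "\<And>b. b \<in> A \<Longrightarrow> \<bar>w b\<bar> = 2 ^ m"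
    and dvd: "2 ^ (m + 1) dvd (\<Sum>b\<in>A. w b)"
  shows "even (card A)"
proof -
  have "2 ^ (m + 1) dvd w b - 2 ^ m" if "b \<in> A" for b
  proof -
    have "w b = 2 ^ m \<or> w b = - (2 ^ m)"
      using abs_w[OF that] by arith
    then show ?thesis by auto
  qed
  then have "2 ^ (m + 1) dvd (\<Sum>b\<in>A. w b - 2 ^ m)"
    by (rule dvd_sum)
  then have "2 ^ (m + 1) dvd (\<Sum>b\<in>A. w b) - int (card A) * 2 ^ m"
    by (simp add: sum_subtractf)
  from dvd_diff[OF dvd this] have "2 ^ m * 2 dvd 2 ^ m * int (card A)"
    by (simp add: ac_simps)
  then show ?thesis by simp
qed

lemma odd_card_inter_nonbent_set:
  fixes F :: "bit ^ 'n \<Rightarrow> bit ^ 'n" and U :: "(bit ^ 'n) set"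
  assumes even: "even CARD('n)" and quadratic: "quadratic_fun F"
    and U: "vec.subspace U" and dim_U: "vec.dim U = CARD('n) div 2 + 1"
  shows "odd (card (U \<inter> nonbent_set F))"
proof -
  obtain m where m: "CARD('n) = 2 * m" using even by blast
  define W where "W b = walsh (component_fun F b) 0" for b
  define Bent where "Bent = {b \<in> U. bent (component_fun F b)}"
  have card_U: "card U = 2 ^ (m + 1)"
    using card_subspace[OF U] dim_U m by simp
  have "2 ^ (m + 1) dvd (\<Sum>b\<in>U. W b)"
    using card_dvd_sum_walsh_components[OF U, of F] card_U by (simp add: W_def)
  moreover have "2 ^ (m + 1) dvd (\<Sum>b\<in>U - Bent. W b)"
  proof (rule dvd_sum)
    fix b assume "b \<in> U - Bent"
    then show "2 ^ (m + 1) dvd W b"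
      using pow2_dvd_walsh_if_not_bent[OF even, of "component_fun F b"] quadratic m
      by (simp add: W_def Bent_def quadratic_fun_def)
  qed
  moreover have "(\<Sum>b\<in>U. W b) = (\<Sum>b\<in>U - Bent. W b) + (\<Sum>b\<in>Bent. W b)"
    by (rule sum.subset_diff) (auto simp: Bent_def)
  ultimately have "2 ^ (m + 1) dvd (\<Sum>b\<in>Bent. W b)"
    by (metis dvd_add_right_iff)
  moreover have "\<bar>W b\<bar> = 2 ^ m" if "b \<in> Bent" for b
    using that m by (simp add: W_def Bent_def bent_iff_walsh)
  ultimately have "even (card Bent)"
    by (intro even_card_if_pow2_dvd_sum) simp_all
  have "0 \<in> U - Bent"
    using vec.subspace_0[OF U] not_bent_const_zero by (simp add: Bent_def component_fun_def)
  then have "card Bent < card U"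
    by (intro psubset_card_mono) (auto simp: Bent_def)
  moreover have "U \<inter> nonbent_set F = U - Bent - {0}"
    by (auto simp: Bent_def nonbent_set_def)
  then have "card (U \<inter> nonbent_set F) = card U - card Bent - 1"
    using \<open>0 \<in> U - Bent\<close> by (simp add: card_Diff_subset Bent_def)
  ultimately show ?thesis
    using card_U \<open>even (card Bent)\<close> by (auto elim!: evenE)
qed

lemma dim_add_dim_le_dim_inter:
  fixes U V :: "('a::field ^ 'n) set"
  assumes "vec.subspace U" "vec.subspace V"
  shows "vec.dim U + vec.dim V \<le> vec.dim (U \<inter> V) + CARD('n)"
  using vec.dim_sums_Int[OF assms] dim_subset_UNIV_cart_gen[of "{x + y |x y. x \<in> U \<and> y \<in> V}"]
  by linarith

lemma three_le_card_inter_if_odd: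
  fixes N V W U :: "(bit ^ 'n) set"
  assumes n: "CARD('n) = 2 * m"
    and V: "vec.subspace V" and W: "vec.subspace W"
    and V_N: "V \<subseteq> N \<union> {0}" and W_N: "W \<subseteq> N \<union> {0}"
    and VW: "V \<inter> W = {0}" and dim_VW: "vec.dim V + vec.dim W = CARD('n)"
    and U: "vec.subspace U" and dim_U: "vec.dim U = m + 1"
    and odd: "odd (card (U \<inter> N))"
  shows "3 \<le> card (U \<inter> N)"
proof -
  let ?d\<^sub>V = "vec.dim (U \<inter> V)" and ?d\<^sub>W = "vec.dim (U \<inter> W)"
  have "2 \<le> ?d\<^sub>V + ?d\<^sub>W"
    using dim_add_dim_le_dim_inter[OF U V] dim_add_dim_le_dim_inter[OF U W] dim_VW dim_U n by linarith
  also have "\<dots> \<le> (2 ^ ?d\<^sub>V - 1) + (2 ^ ?d\<^sub>W - 1)"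
    using less_exp[of ?d\<^sub>V] less_exp[of ?d\<^sub>W] by linarith
  also have "\<dots> = card ((U \<inter> V - {0}) \<union> (U \<inter> W - {0}))"
    using VW by (subst card_Un_disjoint)
      (auto simp: card_subspace_minus_zero vec.subspace_inter U V W)
  also have "\<dots> \<le> card (U \<inter> N)"
    using V_N W_N by (intro card_mono) auto
  finally show ?thesis
    using odd by presburger
qed

lemma exists_partner_if_odd:
  fixes N V\<^sub>0 :: "(bit ^ 'n) set"
  assumes odd: "\<And>U. vec.subspace U \<Longrightarrow> vec.dim U = m + 1 \<Longrightarrow> odd (card (U \<inter> N))"
    and zero: "0 \<notin> N" and "1 \<le> m"
    and V\<^sub>0: "vec.subspace V\<^sub>0" "vec.dim V\<^sub>0 = m" "V\<^sub>0 - {0} \<subseteq> N"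
    and w: "w \<in> N" "w \<notin> V\<^sub>0"
  shows "\<exists>e\<in>N. e \<noteq> w \<and> e + w \<in> V\<^sub>0"
proof -
  define U where "U = vec.span (insert w V\<^sub>0)"
  have span_V\<^sub>0: "vec.span V\<^sub>0 = V\<^sub>0"
    using V\<^sub>0(1) by (simp add: vec.span_eq_iff)
  have "odd (card (U \<inter> N))"
    unfolding U_def
    by (intro odd vec.subspace_span) (simp add: vec.dim_insert span_V\<^sub>0 w(2) V\<^sub>0(2))
  moreover have "even (card (insert w (V\<^sub>0 - {0})))"
    using w(2) card_subspace_minus_zero[OF V\<^sub>0(1)] V\<^sub>0(2) \<open>1 \<le> m\<close> by simp
  ultimately have "insert w (V\<^sub>0 - {0}) \<noteq> U \<inter> N"
    by auto
  moreover have "insert w V\<^sub>0 \<subseteq> U"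
    unfolding U_def by (rule vec.span_superset)
  then have "insert w (V\<^sub>0 - {0}) \<subseteq> U \<inter> N"
    using w(1) V\<^sub>0(3) by blast
  ultimately obtain e where e: "e \<in> U" "e \<in> N" "e \<notin> insert w (V\<^sub>0 - {0})"
    by blast
  then obtain c where "e - c *s w \<in> V\<^sub>0"
    unfolding U_def vec.span_insert span_V\<^sub>0 by blast
  moreover have "e \<notin> V\<^sub>0"
    using e zero by auto
  ultimately have "e + w \<in> V\<^sub>0"
    by (cases c) (simp_all add: bitvec_diff_eq_add)
  then show ?thesis using e by auto
qed

lemma three_pow2_le_pow2_add_pow2:
  fixes m k :: nat
  assumes "m \<le> k" "k \<le> 2 * m"
  shows "3 * ((2 :: nat) ^ m - 1) \<le> (2 ^ k - 1) + 2 * (2 ^ (2 * m - k) - 1)"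
proof -
  have "3 * 2 ^ m \<le> (2 :: nat) ^ k + 2 * 2 ^ (2 * m - k)"
  proof -
    consider "k = m" | "k = m + 1" | "m + 2 \<le> k"
      using assms(1) by linarith
    then show ?thesis
    proof cases
      case 2
      with assms(2) obtain j where "m = Suc j"
        by (cases m) auto
      with 2 show ?thesis by simp
    next
      case 3
      then have "(2 :: nat) ^ (m + 2) \<le> 2 ^ k"
        by (rule power_increasing) simp
      then show ?thesis by simp
    qed simp
  qed
  moreover have "1 \<le> (2 :: nat) ^ m" "1 \<le> (2 :: nat) ^ k" "1 \<le> (2 :: nat) ^ (2 * m - k)"
    by simp_all
  ultimately show ?thesis by linarith
qed

lemma three_pow2_le_card_if_odd:
  fixes N V W :: "(bit ^ 'n) set"
  assumes n: "CARD('n) = 2 * m"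
    and odd: "\<And>U. vec.subspace U \<Longrightarrow> vec.dim U = m + 1 \<Longrightarrow> odd (card (U \<inter> N))"
    and zero: "0 \<notin> N"
    and V: "vec.subspace V" and W: "vec.subspace W"
    and V_N: "V \<subseteq> N \<union> {0}" and W_N: "W \<subseteq> N \<union> {0}"
    and VW: "V \<inter> W = {0}" and dim_VW: "vec.dim V + vec.dim W = CARD('n)"
    and dim_V: "m \<le> vec.dim V"
  shows "3 * (2 ^ m - 1) \<le> card N"
proof -
  have "1 \<le> m"
    using zero_less_card_finite[where 'a = 'n] n by simp
  obtain V\<^sub>0 where V\<^sub>0: "vec.subspace V\<^sub>0" "V\<^sub>0 \<subseteq> V" "vec.dim V\<^sub>0 = m"
    using vec.choose_subspace_of_subspace[OF dim_V] V by (metis vec.span_eq_iff)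
  have "\<exists>e\<in>N. e \<notin> V \<and> e \<notin> W \<and> e + w \<in> V" if w: "w \<in> W - {0}" for w
  proof -
    have "w \<in> N" "w \<notin> V\<^sub>0"
      using w W_N VW V\<^sub>0(2) by auto
    then obtain e where e: "e \<in> N" "e \<noteq> w" "e + w \<in> V\<^sub>0"
      using exists_partner_if_odd[OF odd zero \<open>1 \<le> m\<close> V\<^sub>0(1,3)] V\<^sub>0(2) V_N by blast
    then have "e + w \<in> V"
      using V\<^sub>0(2) by blast
    moreover have "e \<notin> V"
    proof
      assume "e \<in> V"
      then have "w \<in> V"
        using vec.subspace_add[OF V \<open>e \<in> V\<close> \<open>e + w \<in> V\<close>] by simp
      then show False using w VW by blast
    qed
    moreover have "e \<notin> W"
    proof
      assume "e \<in> W"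
      then have "e + w \<in> W" using vec.subspace_add[OF W] w by blast
      with \<open>e + w \<in> V\<close> VW have "e + w = 0" by blast
      with e(2) show False by (simp only: bitvec_add_eq_0_iff)
    qed
    ultimately show ?thesis using e(1) by blast
  qed
  then obtain g where g: "\<And>w. w \<in> W - {0} \<Longrightarrow> g w \<in> N \<and> g w \<notin> V \<and> g w \<notin> W \<and> g w + w \<in> V"
    by metis
  have "inj_on g (W - {0})"
  proof (rule inj_onI)
    fix w w' assume w: "w \<in> W - {0}" and w': "w' \<in> W - {0}" and eq: "g w = g w'"
    have "(g w + w) + (g w' + w') \<in> V"
      using vec.subspace_add[OF V] g[OF w] g[OF w'] by blast
    then have "w + w' \<in> V"
      using eq by (simp add: ac_simps)
    moreover have "w + w' \<in> W"
      using vec.subspace_add[OF W] w w' by blast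
    ultimately have "w + w' = 0"
      using VW by blast
    then show "w = w'"
      by (simp only: bitvec_add_eq_0_iff)
  qed
  then have "card (g ` (W - {0})) = card (W - {0})"
    by (rule card_image)
  moreover have "card ((V - {0}) \<union> (W - {0}) \<union> g ` (W - {0}))
      = card (V - {0}) + card (W - {0}) + card (g ` (W - {0}))"
    using VW g by (subst card_Un_disjoint, simp, simp, blast)+ simp
  moreover have "card ((V - {0}) \<union> (W - {0}) \<union> g ` (W - {0})) \<le> card N"
    using V_N W_N g by (intro card_mono) auto
  ultimately have "card (V - {0}) + 2 * card (W - {0}) \<le> card N"
    by simp
  moreover have "2 * m - vec.dim V = vec.dim W"
    using dim_VW n by simp
  then have "3 * (2 ^ m - 1) \<le> card (V - {0}) + 2 * card (W - {0})"
    using three_pow2_le_pow2_add_pow2[OF dim_V] dim_VW n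
    by (simp add: card_subspace_minus_zero[OF V] card_subspace_minus_zero[OF W])
  ultimately show ?thesis
    by linarith
qed

theorem mainTheorem19:
  fixes F :: "bit ^ 'n \<Rightarrow> bit ^ 'n" and V W :: "(bit ^ 'n) set"
  assumes "even CARD('n)"
    and "quadratic_fun F"
    and "vec.subspace V" and "vec.subspace W"
    and "V \<subseteq> nonbent_set F \<union> {0}" and "W \<subseteq> nonbent_set F \<union> {0}"
    and "V \<inter> W = {0}" and "{v + w | v w. v \<in> V \<and> w \<in> W} = UNIV"
  shows "card (nonbent_set F) \<ge> 3 * (2 ^ (CARD('n) div 2) - 1) \<and>
         (\<forall>U. vec.subspace U \<and> vec.dim U = CARD('n) div 2 + 1
              \<longrightarrow> card (U \<inter> nonbent_set F) \<ge> 3)"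
proof -
  obtain m where m: "CARD('n) = 2 * m"
    using assms(1) by blast
  have odd: "odd (card (U \<inter> nonbent_set F))" if "vec.subspace U" "vec.dim U = m + 1" for U
    using odd_card_inter_nonbent_set[OF assms(1,2) that(1)] that(2) m by simp
  have zero: "0 \<notin> nonbent_set F"
    by (simp add: nonbent_set_def)
  have dim_VW: "vec.dim V + vec.dim W = CARD('n)"
    using vec.dim_sums_Int[OF assms(3,4)] assms(7,8) vec_dim_card[where 'a = bit and 'n = 'n] by simp
  have "3 * (2 ^ m - 1) \<le> card (nonbent_set F)"
  proof (cases "m \<le> vec.dim V")
    case True
    then show ?thesis
      using three_pow2_le_card_if_odd[OF m odd zero assms(3-7) dim_VW] by blast
  next
    case False
    then show ?thesis
      using three_pow2_le_card_if_odd[OF m odd zero assms(4,3,6,5)] assms(7) dim_VW m by (simp add: Int_commute)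
  qed
  moreover have "3 \<le> card (U \<inter> nonbent_set F)" if "vec.subspace U" "vec.dim U = m + 1" for U
    using three_le_card_inter_if_odd[OF m assms(3-7) dim_VW that odd[OF that]] .
  ultimately show ?thesis
    using m by auto
qed

end
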